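(* For $\alpha,\beta\in\mathbb{K}^\times$ with $\alpha\beta\neq1$ let $A_{5,\alpha,\beta}$ be the evolution algebra over the field $\mathbb{K}$ with natural basis $\{e_1,e_2\}$ such that $e_1^2=e_1+\beta e_2$ and $e_2^2=\alpha e_1+e_2$. For such pairs $(\alpha,\beta)$ and $(\alpha',\beta')$, $A_{5,\alpha,\beta}$ is isomorphic to $A_{5,\alpha',\beta'}$ as a $\mathbb{K}$-algebra if and only if $(\alpha,\beta)=(\alpha',\beta')$ or $(\alpha,\beta)=(\beta',\alpha')$.
   Context: An evolution algebra over $\mathbb{K}$ is a $\mathbb{K}$-algebra with a basis $\{e_i\}$ (natural basis) such that $e_ie_j=0$ for $i\neq j$. *)

theory Defs
  imports Main
begin

text \<open>A two-dimensional algebra over a field 'a is modelled on 'a \<times> 'a, with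
  (x1, x2) standing for x1 e1 + x2 e2 in the natural basis {e1, e2}.\<close>

definition vadd :: "'a::field \<times> 'a \<Rightarrow> 'a \<times> 'a \<Rightarrow> 'a \<times> 'a" where
  "vadd x y = (fst x + fst y, snd x + snd y)"

definition smul :: "'a::field \<Rightarrow> 'a \<times> 'a \<Rightarrow> 'a \<times> 'a" where
  "smul c x = (c * fst x, c * snd x)"

text \<open>Multiplication of the two-dimensional evolution algebra with natural basis
  {e1, e2}, e1 e2 = e2 e1 = 0, e1^2 = (fst s1) e1 + (snd s1) e2, e2^2 = (fst s2) e1 + (snd s2) e2,
  extended bilinearly.\<close>

definition evo2_mult :: "'a::field \<times> 'a \<Rightarrow> 'a \<times> 'a \<Rightarrow> 'a \<times> 'a \<Rightarrow> 'a \<times> 'a \<Rightarrow> 'a \<times> 'a" where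
  "evo2_mult s1 s2 x y =
     vadd (smul (fst x * fst y) s1) (smul (snd x * snd y) s2)"

definition A5_mult :: "'a::field \<Rightarrow> 'a \<Rightarrow> 'a \<times> 'a \<Rightarrow> 'a \<times> 'a \<Rightarrow> 'a \<times> 'a" where
  "A5_mult \<alpha> \<beta> = evo2_mult (1, \<beta>) (\<alpha>, 1)"

definition alg_iso :: "('a::field \<times> 'a \<Rightarrow> 'a \<times> 'a \<Rightarrow> 'a \<times> 'a)
     \<Rightarrow> ('a \<times> 'a \<Rightarrow> 'a \<times> 'a \<Rightarrow> 'a \<times> 'a) \<Rightarrow> ('a \<times> 'a \<Rightarrow> 'a \<times> 'a) \<Rightarrow> bool" where
  "alg_iso m1 m2 f \<longleftrightarrow> bij f
     \<and> (\<forall>x y. f (vadd x y) = vadd (f x) (f y))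
     \<and> (\<forall>c x. f (smul c x) = smul c (f x))
     \<and> (\<forall>x y. f (m1 x y) = m2 (f x) (f y))"

definition alg_isomorphic :: "('a::field \<times> 'a \<Rightarrow> 'a \<times> 'a \<Rightarrow> 'a \<times> 'a)
     \<Rightarrow> ('a \<times> 'a \<Rightarrow> 'a \<times> 'a \<Rightarrow> 'a \<times> 'a) \<Rightarrow> bool" where
  "alg_isomorphic m1 m2 \<longleftrightarrow> (\<exists>f. alg_iso m1 m2 f)"

end

theory Submission
  imports Defs
begin

text \<open>Since e1 e2 = 0, an isomorphism sends e1, e2 to vectors whose product vanishes; when the
  structure matrix of the target is nonsingular (here det = 1 - \<alpha>'\<beta>') this forces the images
  to have disjoint supports, so an isomorphism is a diagonal or antidiagonal matrix. Comparing
  e1^2 and e2^2 then shows that the nonzero entries are idempotent, hence equal to 1, and that the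
  structure constants agree, possibly after swapping. Conversely the identity and the swap
  e1 \<leftrightarrow> e2 are isomorphisms.\<close>

lemma evo2_mult_eq:
  "evo2_mult s1 s2 x y =
     (fst x * fst y * fst s1 + snd x * snd y * fst s2, fst x * fst y * snd s1 + snd x * snd y * snd s2)"
  by (simp add: evo2_mult_def vadd_def smul_def)

lemma A5_mult_eq [simp]:
  "A5_mult \<alpha> \<beta> x y = (fst x * fst y + snd x * snd y * \<alpha>, fst x * fst y * \<beta> + snd x * snd y)"
  by (simp add: A5_mult_def evo2_mult_eq)

lemma evo2_mult_eq_zero_iff:
  fixes s1 s2 :: "'a::field \<times> 'a"
  assumes nonsingular: "fst s1 * snd s2 \<noteq> snd s1 * fst s2"
  shows "evo2_mult s1 s2 u v = (0, 0) \<longleftrightarrow> fst u * fst v = 0 \<and> snd u * snd v = 0"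
proof
  assume "evo2_mult s1 s2 u v = (0, 0)"
  moreover define c d where "c = fst u * fst v" and "d = snd u * snd v"
  ultimately have eqs: "c * fst s1 + d * fst s2 = 0" "c * snd s1 + d * snd s2 = 0"
    by (simp_all add: evo2_mult_eq)
  have "c * (fst s1 * snd s2 - snd s1 * fst s2)
          = snd s2 * (c * fst s1 + d * fst s2) - fst s2 * (c * snd s1 + d * snd s2)"
       "d * (fst s1 * snd s2 - snd s1 * fst s2)
          = fst s1 * (c * snd s1 + d * snd s2) - snd s1 * (c * fst s1 + d * fst s2)"
    by (simp_all add: algebra_simps)
  with eqs nonsingular show "fst u * fst v = 0 \<and> snd u * snd v = 0"
    by (simp add: c_def d_def)
qed (auto simp add: evo2_mult_eq)

lemma alg_iso_pair_eq:
  assumes "alg_iso m1 m2 f"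
  shows "f (x1, x2) = (x1 * fst (f (1, 0)) + x2 * fst (f (0, 1)), x1 * snd (f (1, 0)) + x2 * snd (f (0, 1)))"
proof -
  have "(x1, x2) = vadd (smul x1 (1, 0)) (smul x2 (0, 1))"
    by (simp add: vadd_def smul_def)
  then have "f (x1, x2) = vadd (smul x1 (f (1, 0))) (smul x2 (f (0, 1)))"
    using assms unfolding alg_iso_def by metis
  then show ?thesis
    by (simp add: vadd_def smul_def)
qed

lemma alg_iso_eq_zero_iff:
  assumes "alg_iso m1 m2 f"
  shows "f x = (0, 0) \<longleftrightarrow> x = (0, 0)"
proof -
  have "f (0, 0) = (0, 0)"
    using alg_iso_pair_eq [OF assms, of 0 0] by simp
  moreover have "inj f"
    using assms unfolding alg_iso_def bij_def by blast
  ultimately show ?thesis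
    by (metis injD)
qed

lemma evo2_iso_basis_supports:
  fixes s1 s2 t1 t2 :: "'a::field \<times> 'a"
  assumes iso: "alg_iso (evo2_mult s1 s2) (evo2_mult t1 t2) f"
    and nonsingular: "fst t1 * snd t2 \<noteq> snd t1 * fst t2"
  shows "(snd (f (1, 0)) = 0 \<and> fst (f (0, 1)) = 0) \<or> (fst (f (1, 0)) = 0 \<and> snd (f (0, 1)) = 0)"
proof -
  have "evo2_mult t1 t2 (f (1, 0)) (f (0, 1)) = f (evo2_mult s1 s2 (1, 0) (0, 1))"
    using iso unfolding alg_iso_def by simp
  also have "\<dots> = (0, 0)"
    using alg_iso_eq_zero_iff [OF iso] by (simp add: evo2_mult_eq)
  finally have "fst (f (1, 0)) * fst (f (0, 1)) = 0" "snd (f (1, 0)) * snd (f (0, 1)) = 0"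
    using evo2_mult_eq_zero_iff [OF nonsingular] by simp_all
  moreover have "f (1, 0) \<noteq> (0, 0)" "f (0, 1) \<noteq> (0, 0)"
    using alg_iso_eq_zero_iff [OF iso] by simp_all
  ultimately show ?thesis
    by (metis mult_eq_0_iff prod.collapse)
qed

lemma A5_iso_params:
  fixes \<alpha> \<beta> \<alpha>' \<beta>' :: "'a::field"
  assumes iso: "alg_iso (A5_mult \<alpha> \<beta>) (A5_mult \<alpha>' \<beta>') f" and "\<alpha>' * \<beta>' \<noteq> 1"
  shows "(\<alpha>, \<beta>) = (\<alpha>', \<beta>') \<or> (\<alpha>, \<beta>) = (\<beta>', \<alpha>')"
proof -
  obtain a b p q where e1: "f (1, 0) = (a, b)" and e2: "f (0, 1) = (p, q)"
    by fastforce
  have lin: "f (x1, x2) = (x1 * a + x2 * p, x1 * b + x2 * q)" for x1 x2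
    using alg_iso_pair_eq [OF iso, of x1 x2] by (simp add: e1 e2)
  have nonzero: "(a, b) \<noteq> (0, 0)" "(p, q) \<noteq> (0, 0)"
    using alg_iso_eq_zero_iff [OF iso, of "(1, 0)"] alg_iso_eq_zero_iff [OF iso, of "(0, 1)"]
    by (simp_all add: e1 e2)
  have mult: "f (A5_mult \<alpha> \<beta> x y) = A5_mult \<alpha>' \<beta>' (f x) (f y)" for x y
    using iso unfolding alg_iso_def by blast
  have sq1: "a + \<beta> * p = a * a + b * b * \<alpha>'" "b + \<beta> * q = a * a * \<beta>' + b * b"
    using mult [of "(1, 0)" "(1, 0)"] by (simp_all add: lin)
  have sq2: "\<alpha> * a + p = p * p + q * q * \<alpha>'" "\<alpha> * b + q = p * p * \<beta>' + q * q"
    using mult [of "(0, 1)" "(0, 1)"] by (simp_all add: lin)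
  have "(b = 0 \<and> p = 0) \<or> (a = 0 \<and> q = 0)"
    using evo2_iso_basis_supports [OF iso [unfolded A5_mult_def]] assms(2) e1 e2
    by (simp add: mult.commute)
  then show ?thesis
  proof
    assume "b = 0 \<and> p = 0"
    then have "a * a = a * 1" "q * q = q * 1" "a \<noteq> 0" "q \<noteq> 0"
      using sq1(1) sq2(2) nonzero by simp_all
    then have "a = 1" "q = 1"
      by (metis mult_left_cancel)+
    with \<open>b = 0 \<and> p = 0\<close> show ?thesis
      using sq1(2) sq2(1) by simp
  next
    assume "a = 0 \<and> q = 0"
    then have "b * b = b * 1" "p * p = p * 1" "b \<noteq> 0" "p \<noteq> 0"
      using sq1(2) sq2(1) nonzero by simp_all
    then have "b = 1" "p = 1"
      by (metis mult_left_cancel)+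
    with \<open>a = 0 \<and> q = 0\<close> show ?thesis
      using sq1(1) sq2(2) by simp
  qed
qed

lemma alg_iso_id: "alg_iso m m id"
  by (simp add: alg_iso_def)

lemma A5_swap_iso: "alg_iso (A5_mult \<alpha> \<beta>) (A5_mult \<beta> \<alpha>) prod.swap"
  by (simp add: alg_iso_def vadd_def smul_def algebra_simps)

theorem lemma3p6:
  fixes \<alpha> \<beta> \<alpha>' \<beta>' :: "'a::field"
  assumes "\<alpha> \<noteq> 0" and "\<beta> \<noteq> 0" and "\<alpha> * \<beta> \<noteq> 1"
      and "\<alpha>' \<noteq> 0" and "\<beta>' \<noteq> 0" and "\<alpha>' * \<beta>' \<noteq> 1"
  shows "alg_isomorphic (A5_mult \<alpha> \<beta>) (A5_mult \<alpha>' \<beta>')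
         \<longleftrightarrow> ((\<alpha>, \<beta>) = (\<alpha>', \<beta>') \<or> (\<alpha>, \<beta>) = (\<beta>', \<alpha>'))"
proof
  assume "alg_isomorphic (A5_mult \<alpha> \<beta>) (A5_mult \<alpha>' \<beta>')"
  then show "(\<alpha>, \<beta>) = (\<alpha>', \<beta>') \<or> (\<alpha>, \<beta>) = (\<beta>', \<alpha>')"
    using A5_iso_params assms(6) unfolding alg_isomorphic_def by blast
next
  assume "(\<alpha>, \<beta>) = (\<alpha>', \<beta>') \<or> (\<alpha>, \<beta>) = (\<beta>', \<alpha>')"
  then show "alg_isomorphic (A5_mult \<alpha> \<beta>) (A5_mult \<alpha>' \<beta>')"
    using alg_iso_id A5_swap_iso unfolding alg_isomorphic_def by blast
qed

end
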